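(* Let $G$ be a multigraph without self-loops whose vertex set is partitioned into three disjoint sets $\{s,t\}$, $\mathcal A$, $\mathcal B$ (with $s\ne t$) such that: the subgraph induced by $\mathcal A\cup\mathcal B$ is connected; each of $s,t$ has at least one incident edge connecting to $\mathcal A$, and each vertex of $\mathcal A$ has at least one incident edge connecting to $\{s,t\}$; and each vertex of $\mathcal B$ has at least 2 distinct neighbors in $\mathcal A$. Then $G$ admits an $(s,t)$-bipolar orientation.
   Context: $G$ admits an $(s,t)$-bipolar orientation if its edges can be directed so that there are no directed cycles, $s$ is the unique source (vertex with no incoming edges), and $t$ is the unique sink (vertex with no outgoing edges). *)

theory Defs
  imports Main
begin

text \<open>A finite multigraph is given by a vertex set V, an edge set E (edges are
abstract objects, so parallel edges are allowed) and an endpoint map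
ends :: edge => (vertex, vertex). The pair order of ends e is arbitrary;
the graph is undirected.\<close>

definition multigraph_no_loops :: "'v set \<Rightarrow> 'e set \<Rightarrow> ('e \<Rightarrow> 'v \<times> 'v) \<Rightarrow> bool" where
  "multigraph_no_loops V E ends \<longleftrightarrow> finite V \<and> finite E \<and>
     (\<forall>e\<in>E. fst (ends e) \<in> V \<and> snd (ends e) \<in> V \<and> fst (ends e) \<noteq> snd (ends e))"

definition adjacent :: "'e set \<Rightarrow> ('e \<Rightarrow> 'v \<times> 'v) \<Rightarrow> 'v \<Rightarrow> 'v \<Rightarrow> bool" where
  "adjacent E ends u v \<longleftrightarrow> (\<exists>e\<in>E. ends e = (u, v) \<or> ends e = (v, u))"

definition induced_connected :: "'e set \<Rightarrow> ('e \<Rightarrow> 'v \<times> 'v) \<Rightarrow> 'v set \<Rightarrow> bool" where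
  "induced_connected E ends S \<longleftrightarrow>
     (\<forall>x\<in>S. \<forall>y\<in>S. (x, y) \<in> ({(u, v). u \<in> S \<and> v \<in> S \<and> adjacent E ends u v})\<^sup>*)"

definition is_orientation :: "'e set \<Rightarrow> ('e \<Rightarrow> 'v \<times> 'v) \<Rightarrow> ('e \<Rightarrow> 'v \<times> 'v) \<Rightarrow> bool" where
  "is_orientation E ends ori \<longleftrightarrow> (\<forall>e\<in>E. ori e = ends e \<or> ori e = prod.swap (ends e))"

definition arcs :: "'e set \<Rightarrow> ('e \<Rightarrow> 'v \<times> 'v) \<Rightarrow> ('v \<times> 'v) set" where
  "arcs E ori = ori ` E"

definition is_source :: "'v set \<Rightarrow> 'e set \<Rightarrow> ('e \<Rightarrow> 'v \<times> 'v) \<Rightarrow> 'v \<Rightarrow> bool" where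
  "is_source V E ori v \<longleftrightarrow> v \<in> V \<and> (\<forall>e\<in>E. snd (ori e) \<noteq> v)"

definition is_sink :: "'v set \<Rightarrow> 'e set \<Rightarrow> ('e \<Rightarrow> 'v \<times> 'v) \<Rightarrow> 'v \<Rightarrow> bool" where
  "is_sink V E ori v \<longleftrightarrow> v \<in> V \<and> (\<forall>e\<in>E. fst (ori e) \<noteq> v)"

definition bipolar_orientation ::
  "'v set \<Rightarrow> 'e set \<Rightarrow> ('e \<Rightarrow> 'v \<times> 'v) \<Rightarrow> 'v \<Rightarrow> 'v \<Rightarrow> ('e \<Rightarrow> 'v \<times> 'v) \<Rightarrow> bool" where
  "bipolar_orientation V E ends s t ori \<longleftrightarrow>
     is_orientation E ends ori \<and> acyclic (arcs E ori) \<and>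
     (\<forall>v\<in>V. is_source V E ori v \<longleftrightarrow> v = s) \<and>
     (\<forall>v\<in>V. is_sink V E ori v \<longleftrightarrow> v = t)"

definition admits_bipolar_orientation ::
  "'v set \<Rightarrow> 'e set \<Rightarrow> ('e \<Rightarrow> 'v \<times> 'v) \<Rightarrow> 'v \<Rightarrow> 'v \<Rightarrow> bool" where
  "admits_bipolar_orientation V E ends s t \<longleftrightarrow> (\<exists>ori. bipolar_orientation V E ends s t ori)"

end

theory Submission
  imports Defs Complex_Main
begin

text \<open>
  Under the hypotheses, deleting any vertex x leaves every other vertex connected to s or t.
  Such a graph has an st-numbering, built by adding ears (Lempel, Even and Cederbaum): start
  with s and t numbered 0 and 1; while some vertex lies outside the numbered set X, it lies on a
  walk outside X joining two distinct numbered vertices x and y, and numbering the vertices of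
  this walk one at a time with fresh reals between the numbers of x and y keeps the invariant
  that every numbered vertex other than s and t has a lower and a higher numbered neighbour.
  Orienting every edge towards its larger end then gives the bipolar orientation.
\<close>

definition adj_outside :: "'e set \<Rightarrow> ('e \<Rightarrow> 'v \<times> 'v) \<Rightarrow> 'v set \<Rightarrow> ('v \<times> 'v) set" where
  "adj_outside E ends X = {(a, b). a \<notin> X \<and> b \<notin> X \<and> adjacent E ends a b}"

lemma adjacent_sym: "adjacent E ends a b \<Longrightarrow> adjacent E ends b a"
  unfolding adjacent_def by auto

lemma adjacent_in_vertices:
  assumes "multigraph_no_loops V E ends" "adjacent E ends a b"
  shows "a \<in> V" "b \<in> V" "a \<noteq> b"
  using assms unfolding adjacent_def multigraph_no_loops_def by force+

lemma sym_adj_outside: "sym (adj_outside E ends X)"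
  unfolding adj_outside_def sym_def using adjacent_sym by fast

lemma adj_outside_insert:
  "Restr (adj_outside E ends X) (- {z}) = adj_outside E ends (insert z X)"
  unfolding adj_outside_def by auto

lemma rtrancl_first_entry:
  assumes "(a, b) \<in> R\<^sup>*" "a \<notin> X" "b \<in> X"
  shows "\<exists>u v. (a, u) \<in> (Restr R (- X))\<^sup>* \<and> (u, v) \<in> R \<and> u \<notin> X \<and> v \<in> X"
proof -
  have "(b \<notin> X \<and> (a, b) \<in> (Restr R (- X))\<^sup>*)
    \<or> (\<exists>u v. (a, u) \<in> (Restr R (- X))\<^sup>* \<and> (u, v) \<in> R \<and> u \<notin> X \<and> v \<in> X)"
    using assms(1)
  proof (induction rule: rtrancl_induct)
    case (step b c)
    then show ?case
      by (cases "c \<in> X") (auto intro: rtrancl_into_rtrancl)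
  qed (use assms(2) in simp)
  then show ?thesis using assms(3) by blast
qed

lemma rtrancl_leave_last:
  assumes "(z, w) \<in> R\<^sup>*" "z \<noteq> w"
  shows "\<exists>z'. (z, z') \<in> R \<and> z' \<noteq> z \<and> (z', w) \<in> (Restr R (- {z}))\<^sup>*"
proof -
  have "(\<exists>z'. (z, z') \<in> R \<and> z' \<noteq> z \<and> (z', w) \<in> (Restr R (- {z}))\<^sup>*)
    \<or> (a \<noteq> z \<and> (a, w) \<in> (Restr R (- {z}))\<^sup>*)" if "(a, w) \<in> R\<^sup>*" for a
    using that
  proof (induction rule: converse_rtrancl_induct)
    case (step a b)
    then show ?case
      by (cases "a = z") (auto intro: converse_rtrancl_into_rtrancl)
  qed (use assms(2) in simp)
  then show ?thesis using assms(1) by blast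
qed

definition orient_by :: "('v \<Rightarrow> 'a::linorder) \<Rightarrow> ('e \<Rightarrow> 'v \<times> 'v) \<Rightarrow> 'e \<Rightarrow> 'v \<times> 'v" where
  "orient_by f ends e =
     (if f (fst (ends e)) < f (snd (ends e)) then ends e else prod.swap (ends e))"

lemma is_orientation_orient_by: "is_orientation E ends (orient_by f ends)"
  unfolding is_orientation_def orient_by_def by auto

lemma orient_by_in_vertices:
  assumes "multigraph_no_loops V E ends" "e \<in> E"
  shows "fst (orient_by f ends e) \<in> V" "snd (orient_by f ends e) \<in> V"
  using assms unfolding multigraph_no_loops_def orient_by_def by auto

lemma orient_by_increasing:
  assumes "multigraph_no_loops V E ends" "inj_on f V" "e \<in> E"
  shows "f (fst (orient_by f ends e)) < f (snd (orient_by f ends e))"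
proof -
  have "f (fst (ends e)) \<noteq> f (snd (ends e))"
    using assms unfolding multigraph_no_loops_def by (metis inj_onD)
  then show ?thesis unfolding orient_by_def by auto
qed

lemma orient_by_arc:
  assumes "adjacent E ends u v" "f u < f v"
  shows "\<exists>e\<in>E. orient_by f ends e = (u, v)"
proof -
  obtain e where "e \<in> E" "ends e = (u, v) \<or> ends e = (v, u)"
    using assms(1) unfolding adjacent_def by blast
  moreover from this have "orient_by f ends e = (u, v)"
    using assms(2) unfolding orient_by_def by auto
  ultimately show ?thesis by blast
qed

lemma acyclic_orient_by:
  assumes "multigraph_no_loops V E ends" "inj_on f V"
  shows "acyclic (arcs E (orient_by f ends))"
proof -
  have "arcs E (orient_by f ends) \<subseteq> {(a, b). f a < f b}"
    using orient_by_increasing[OF assms] unfolding arcs_def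
    by (auto simp: image_subset_iff split_beta)
  moreover have "trans {(a, b). f a < f b}"
    by (auto intro: transI)
  then have "acyclic {(a, b). f a < f b}"
    by (simp add: acyclic_irrefl irrefl_def)
  ultimately show ?thesis by (rule acyclic_subset[rotated])
qed

lemma bipolar_orientation_orient_by:
  assumes mg: "multigraph_no_loops V E ends" and inj: "inj_on f V"
    and bounds: "\<forall>v\<in>V. f s \<le> f v \<and> f v \<le> f t"
    and lower: "\<forall>v\<in>V - {s}. \<exists>u. adjacent E ends u v \<and> f u < f v"
    and upper: "\<forall>v\<in>V - {t}. \<exists>w. adjacent E ends v w \<and> f v < f w"
  shows "bipolar_orientation V E ends s t (orient_by f ends)"
proof -
  note increasing = orient_by_increasing[OF mg inj]
  note in_V = orient_by_in_vertices[OF mg, where f = f]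
  have no_arc_into_s: "snd (orient_by f ends e) \<noteq> s" if "e \<in> E" for e
    using increasing[OF that] bspec[OF bounds in_V(1)[OF that]] by auto
  have no_arc_out_of_t: "fst (orient_by f ends e) \<noteq> t" if "e \<in> E" for e
    using increasing[OF that] bspec[OF bounds in_V(2)[OF that]] by auto
  have "is_source V E (orient_by f ends) v \<longleftrightarrow> v = s" if vV: "v \<in> V" for v
  proof
    assume source: "is_source V E (orient_by f ends) v"
    show "v = s"
    proof (rule ccontr)
      assume "v \<noteq> s"
      then obtain u where "adjacent E ends u v" "f u < f v" using lower vV by blast
      then obtain e where "e \<in> E" "orient_by f ends e = (u, v)" by (metis orient_by_arc)
      then show False using source unfolding is_source_def by force
    qed
  next
    assume "v = s"
    then show "is_source V E (orient_by f ends) v"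
      using vV no_arc_into_s unfolding is_source_def by blast
  qed
  moreover have "is_sink V E (orient_by f ends) v \<longleftrightarrow> v = t" if vV: "v \<in> V" for v
  proof
    assume sink: "is_sink V E (orient_by f ends) v"
    show "v = t"
    proof (rule ccontr)
      assume "v \<noteq> t"
      then obtain w where "adjacent E ends v w" "f v < f w" using upper vV by blast
      then obtain e where "e \<in> E" "orient_by f ends e = (v, w)" by (metis orient_by_arc)
      then show False using sink unfolding is_sink_def by force
    qed
  next
    assume "v = t"
    then show "is_sink V E (orient_by f ends) v"
      using vV no_arc_out_of_t unfolding is_sink_def by blast
  qed
  ultimately show ?thesis
    unfolding bipolar_orientation_def
    using is_orientation_orient_by acyclic_orient_by[OF mg inj] by simp
qed

lemma ex_between_not_in_finite:
  fixes a b :: "'a::dense_linorder"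
  assumes "a < b" "finite S"
  shows "\<exists>c. a < c \<and> c < b \<and> c \<notin> S"
proof -
  have "infinite ({a<..<b} - S)"
    using Diff_infinite_finite[OF assms(2) infinite_Ioo[OF assms(1)]] .
  then obtain c where "c \<in> {a<..<b} - S"
    using infinite_imp_nonempty by blast
  then show ?thesis by auto
qed

text \<open>The assumption \<open>pole_reachable\<close> says that G plus an extra edge st is 2-connected.\<close>

locale st_biconnected =
  fixes V :: "'v set" and E :: "'e set" and ends :: "'e \<Rightarrow> 'v \<times> 'v" and s t :: 'v
  assumes multigraph: "multigraph_no_loops V E ends"
    and poles_distinct: "s \<noteq> t" and s_in_V: "s \<in> V" and t_in_V: "t \<in> V"
    and s_has_neighbour: "\<exists>u. adjacent E ends s u"
    and t_has_neighbour: "\<exists>u. adjacent E ends t u"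
    and pole_reachable: "\<And>x v. x \<in> V \<Longrightarrow> v \<in> V - {s, t, x} \<Longrightarrow>
      \<exists>r\<in>{s, t} - {x}. (v, r) \<in> (adj_outside E ends {x})\<^sup>*"
begin

abbreviation adj :: "'v \<Rightarrow> 'v \<Rightarrow> bool" where
  "adj \<equiv> adjacent E ends"

lemma finite_V: "finite V"
  using multigraph unfolding multigraph_no_loops_def by simp

definition has_lower_neighbour :: "'v set \<Rightarrow> ('v \<Rightarrow> real) \<Rightarrow> 'v \<Rightarrow> bool" where
  "has_lower_neighbour X f v \<longleftrightarrow> (\<exists>u\<in>X. adj u v \<and> f u < f v)"

definition has_upper_neighbour :: "'v set \<Rightarrow> ('v \<Rightarrow> real) \<Rightarrow> 'v \<Rightarrow> bool" where
  "has_upper_neighbour X f v \<longleftrightarrow> (\<exists>w\<in>X. adj v w \<and> f v < f w)"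

definition st_bounded :: "'v set \<Rightarrow> ('v \<Rightarrow> real) \<Rightarrow> bool" where
  "st_bounded X f \<longleftrightarrow> s \<in> X \<and> t \<in> X \<and> X \<subseteq> V \<and> inj_on f X \<and> (\<forall>v\<in>X. f s \<le> f v \<and> f v \<le> f t)"

definition st_numbering :: "'v set \<Rightarrow> ('v \<Rightarrow> real) \<Rightarrow> bool" where
  "st_numbering X f \<longleftrightarrow> st_bounded X f \<and>
     (\<forall>v\<in>X - {s, t}. has_lower_neighbour X f v \<and> has_upper_neighbour X f v)"

text \<open>An ear from x to y is being numbered: its last numbered vertex x may still lack a higher
  neighbour.\<close>

definition open_ear :: "'v set \<Rightarrow> ('v \<Rightarrow> real) \<Rightarrow> 'v \<Rightarrow> 'v \<Rightarrow> bool" where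
  "open_ear X f x y \<longleftrightarrow> st_bounded X f \<and> x \<in> X \<and> y \<in> X \<and> f x < f y \<and>
     (x \<noteq> s \<longrightarrow> has_lower_neighbour X f x) \<and>
     (\<forall>v\<in>X - {s, t, x}. has_lower_neighbour X f v \<and> has_upper_neighbour X f v)"

lemma has_lower_neighbour_insert:
  "has_lower_neighbour X f v \<Longrightarrow> z \<notin> X \<Longrightarrow> v \<in> X \<Longrightarrow>
    has_lower_neighbour (insert z X) (f(z := c)) v"
  unfolding has_lower_neighbour_def by (metis fun_upd_other insertCI)

lemma has_upper_neighbour_insert:
  "has_upper_neighbour X f v \<Longrightarrow> z \<notin> X \<Longrightarrow> v \<in> X \<Longrightarrow>
    has_upper_neighbour (insert z X) (f(z := c)) v"
  unfolding has_upper_neighbour_def by (metis fun_upd_other insertCI)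

lemma open_ear_if_st_numbering:
  assumes "st_numbering X f" "x \<in> X" "y \<in> X" "f x < f y"
  shows "open_ear X f x y"
proof -
  have "x \<noteq> t"
    using assms unfolding st_numbering_def st_bounded_def by force
  then show ?thesis
    using assms unfolding st_numbering_def open_ear_def by blast
qed

lemma st_numbering_if_open_ear:
  assumes "open_ear X f x y" "adj x y"
  shows "st_numbering X f"
proof -
  have "has_upper_neighbour X f x"
    using assms unfolding open_ear_def has_upper_neighbour_def by blast
  then show ?thesis
    using assms(1) unfolding open_ear_def st_numbering_def by blast
qed

lemma open_ear_insert:
  assumes ear: "open_ear X f x y" and xz: "adj x z" and z: "z \<notin> X"
    and c: "f x < c" "c < f y" "c \<notin> f ` X"
  shows "open_ear (insert z X) (f(z := c)) z y"
proof -
  let ?g = "f(z := c)"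
  from ear have bounded: "st_bounded X f" and "x \<in> X" "y \<in> X"
    and lower_x: "x \<noteq> s \<longrightarrow> has_lower_neighbour X f x"
    and inner: "\<forall>v\<in>X - {s, t, x}. has_lower_neighbour X f v \<and> has_upper_neighbour X f v"
    unfolding open_ear_def by blast+
  have "s \<in> X" "t \<in> X" "X \<subseteq> V" "inj_on f X" and bounds: "\<forall>v\<in>X. f s \<le> f v \<and> f v \<le> f t"
    using bounded unfolding st_bounded_def by blast+
  have "z \<in> V"
    using adjacent_in_vertices[OF multigraph xz] by simp
  have gz: "?g z = c" and g_X: "\<forall>v\<in>X. ?g v = f v"
    using z by auto
  have "inj_on ?g X"
    using \<open>inj_on f X\<close> c(3) by (rule inj_on_fun_updI)
  then have "inj_on ?g (insert z X)"
    using z c(3) g_X by simp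
  moreover have "f s < c" "c < f t"
    using bounds c(1,2) \<open>x \<in> X\<close> \<open>y \<in> X\<close> by fastforce+
  ultimately have "st_bounded (insert z X) ?g"
    using \<open>s \<in> X\<close> \<open>t \<in> X\<close> \<open>X \<subseteq> V\<close> \<open>z \<in> V\<close> bounds z
    unfolding st_bounded_def by auto
  moreover have "has_lower_neighbour (insert z X) ?g z"
    unfolding has_lower_neighbour_def using \<open>x \<in> X\<close> xz c(1) gz g_X by auto
  moreover have "has_upper_neighbour (insert z X) ?g x"
    unfolding has_upper_neighbour_def using xz c(1) gz g_X \<open>x \<in> X\<close> by auto
  moreover have "has_lower_neighbour (insert z X) ?g v \<and> has_upper_neighbour (insert z X) ?g v"
    if "v \<in> X - {s, t, x}" for v
    using inner that z has_lower_neighbour_insert has_upper_neighbour_insert by blast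
  moreover have "has_lower_neighbour (insert z X) ?g x" if "x \<noteq> s"
    using lower_x that z \<open>x \<in> X\<close> has_lower_neighbour_insert by blast
  ultimately show ?thesis
    using \<open>x \<in> X\<close> \<open>y \<in> X\<close> c(2) gz g_X z unfolding open_ear_def by auto
qed

lemma open_ear_completes:
  assumes "open_ear X f x y" "adj x z" "z \<notin> X"
    and "(z, w) \<in> (adj_outside E ends X)\<^sup>*" "adj w y"
  shows "\<exists>X' g. X \<subset> X' \<and> st_numbering X' g"
  using assms
proof (induction "card (V - X)" arbitrary: X f x z rule: less_induct)
  case less
  have "finite (f ` X)"
    using less.prems(1) finite_V unfolding open_ear_def st_bounded_def
    by (meson finite_imageI finite_subset)
  then obtain c where c: "f x < c" "c < f y" "c \<notin> f ` X"
    using ex_between_not_in_finite less.prems(1) unfolding open_ear_def by meson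
  let ?g = "f(z := c)"
  have ear: "open_ear (insert z X) ?g z y"
    using open_ear_insert[OF less.prems(1-3) c] .
  have bigger: "X \<subset> insert z X"
    using \<open>z \<notin> X\<close> by blast
  txt \<open>The walk need not be simple: continue from where it leaves z for the last time.\<close>
  show ?case
  proof (cases "z = w")
    case True
    then show ?thesis
      using st_numbering_if_open_ear[OF ear] \<open>adj w y\<close> bigger by blast
  next
    case False
    then obtain z' where "(z, z') \<in> adj_outside E ends X" "z' \<noteq> z"
      and "(z', w) \<in> (adj_outside E ends (insert z X))\<^sup>*"
      using rtrancl_leave_last[OF less.prems(4)] adj_outside_insert by metis
    moreover have "card (V - insert z X) < card (V - X)"
      using less.prems(1-3) adjacent_in_vertices[OF multigraph] finite_V
      by (metis Diff_insert card_Diff1_less DiffI finite_Diff)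
    ultimately obtain X' g where "insert z X \<subset> X'" "st_numbering X' g"
      using less.hyps[OF _ ear] \<open>adj w y\<close> unfolding adj_outside_def by blast
    then show ?thesis
      using bigger by blast
  qed
qed

lemma walk_to_X_avoiding:
  assumes "s \<in> X" "t \<in> X" "X \<subseteq> V" "x \<in> X" "v \<in> V - X"
  shows "\<exists>y\<in>X - {x}. \<exists>w. w \<notin> X \<and> (v, w) \<in> (adj_outside E ends X)\<^sup>* \<and> adj w y"
proof -
  obtain r where r: "r \<in> {s, t} - {x}" "(v, r) \<in> (adj_outside E ends {x})\<^sup>*"
    using pole_reachable assms by blast
  have "r \<in> X" "v \<notin> X"
    using r(1) assms by auto
  then obtain w y where walk: "(v, w) \<in> (Restr (adj_outside E ends {x}) (- X))\<^sup>*"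
    and step: "(w, y) \<in> adj_outside E ends {x}" and "w \<notin> X" "y \<in> X"
    using rtrancl_first_entry[OF r(2)] by blast
  have "Restr (adj_outside E ends {x}) (- X) \<subseteq> adj_outside E ends X"
    unfolding adj_outside_def by auto
  then have "(v, w) \<in> (adj_outside E ends X)\<^sup>*"
    using walk rtrancl_mono by blast
  moreover have "y \<noteq> x" "adj w y"
    using step unfolding adj_outside_def by auto
  ultimately show ?thesis
    using \<open>w \<notin> X\<close> \<open>y \<in> X\<close> by blast
qed

lemma ear_exists:
  assumes "s \<in> X" "t \<in> X" "X \<subseteq> V" "v \<in> V - X"
  shows "\<exists>x y z w. x \<in> X \<and> y \<in> X \<and> x \<noteq> y \<and> z \<notin> X \<and> w \<notin> X \<and> adj x z
    \<and> (z, w) \<in> (adj_outside E ends X)\<^sup>* \<and> adj w y"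
proof -
  obtain x z where x: "x \<in> X" "z \<notin> X" "(v, z) \<in> (adj_outside E ends X)\<^sup>*" "adj z x"
    using walk_to_X_avoiding[OF assms(1-3,1,4)] by blast
  obtain y w where y: "y \<in> X - {x}" "w \<notin> X" "(v, w) \<in> (adj_outside E ends X)\<^sup>*" "adj w y"
    using walk_to_X_avoiding[OF assms(1-3) x(1) assms(4)] by blast
  have "(z, v) \<in> (adj_outside E ends X)\<^sup>*"
    using symD[OF sym_rtrancl[OF sym_adj_outside] x(3)] .
  then have "(z, w) \<in> (adj_outside E ends X)\<^sup>*"
    using y(3) by (rule rtrancl_trans)
  moreover have "adj x z"
    using adjacent_sym x(4) .
  ultimately show ?thesis
    using x(1,2) y(1,2,4) by blast
qed

lemma st_numbering_extend:
  assumes numbering: "st_numbering X f" and "X \<noteq> V"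
  shows "\<exists>X' g. X \<subset> X' \<and> st_numbering X' g"
proof -
  have "s \<in> X" "t \<in> X" "X \<subseteq> V" "inj_on f X"
    using numbering unfolding st_numbering_def st_bounded_def by blast+
  then obtain v where "v \<in> V - X"
    using \<open>X \<noteq> V\<close> by blast
  then obtain x y z w where ear: "x \<in> X" "y \<in> X" "x \<noteq> y" "z \<notin> X" "w \<notin> X" "adj x z"
    "(z, w) \<in> (adj_outside E ends X)\<^sup>*" "adj w y"
    using ear_exists[OF \<open>s \<in> X\<close> \<open>t \<in> X\<close> \<open>X \<subseteq> V\<close>] by blast
  have "f x \<noteq> f y"
    using \<open>inj_on f X\<close> ear(1-3) by (metis inj_onD)
  then consider "f x < f y" | "f y < f x"
    by linarith
  then show ?thesis
  proof cases
    case 1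
    show ?thesis
      using open_ear_completes[OF open_ear_if_st_numbering[OF numbering ear(1,2) 1]
          ear(6,4,7,8)] .
  next
    case 2
    have "(w, z) \<in> (adj_outside E ends X)\<^sup>*"
      using symD[OF sym_rtrancl[OF sym_adj_outside] ear(7)] .
    with 2 show ?thesis
      using open_ear_completes[OF open_ear_if_st_numbering[OF numbering ear(2,1)]
          adjacent_sym[OF ear(8)] ear(5) _ adjacent_sym[OF ear(6)]] by blast
  qed
qed

lemma st_numbering_exists: "\<exists>f. st_numbering V f"
proof -
  have "\<exists>g. st_numbering V g" if "st_numbering X f" for X f
    using that
  proof (induction "card (V - X)" arbitrary: X f rule: less_induct)
    case less
    show ?case
    proof (cases "X = V")
      case True
      then show ?thesis using less.prems by blast
    next
      case False
      then obtain X' g where "X \<subset> X'" "st_numbering X' g"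
        using st_numbering_extend[OF less.prems] by blast
      moreover have "X' \<subseteq> V"
        using \<open>st_numbering X' g\<close> unfolding st_numbering_def st_bounded_def by blast
      then have "card (V - X') < card (V - X)"
        using \<open>X \<subset> X'\<close> finite_V by (intro psubset_card_mono) auto
      ultimately show ?thesis
        using less.hyps by blast
    qed
  qed
  moreover have "st_numbering {s, t} (\<lambda>v. if v = s then 0 else 1)"
    using poles_distinct s_in_V t_in_V unfolding st_numbering_def st_bounded_def by auto
  ultimately show ?thesis by blast
qed

lemma st_bounded_strict:
  assumes "st_bounded X f" "v \<in> X"
  shows "v \<noteq> s \<Longrightarrow> f s < f v" and "v \<noteq> t \<Longrightarrow> f v < f t"
proof -
  have "inj_on f X" "s \<in> X" "t \<in> X" "f s \<le> f v" "f v \<le> f t"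
    using assms unfolding st_bounded_def by blast+
  then show "v \<noteq> s \<Longrightarrow> f s < f v" and "v \<noteq> t \<Longrightarrow> f v < f t"
    using inj_onD[of f X v s] inj_onD[of f X v t] \<open>v \<in> X\<close> by fastforce+
qed

lemma st_numbering_lower_neighbour:
  assumes "st_numbering V f" "v \<in> V" "v \<noteq> s"
  shows "\<exists>u. adj u v \<and> f u < f v"
proof (cases "v = t")
  case True
  obtain u where "adj t u"
    using t_has_neighbour by blast
  moreover have "u \<in> V" "u \<noteq> t"
    using adjacent_in_vertices[OF multigraph \<open>adj t u\<close>] by simp_all
  ultimately show ?thesis
    using True adjacent_sym[OF \<open>adj t u\<close>] st_bounded_strict(2) assms(1)
    unfolding st_numbering_def by blast
next
  case False
  then show ?thesis
    using assms unfolding st_numbering_def has_lower_neighbour_def by blast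
qed

lemma st_numbering_upper_neighbour:
  assumes "st_numbering V f" "v \<in> V" "v \<noteq> t"
  shows "\<exists>w. adj v w \<and> f v < f w"
proof (cases "v = s")
  case True
  obtain w where "adj s w"
    using s_has_neighbour by blast
  moreover have "w \<in> V" "w \<noteq> s"
    using adjacent_in_vertices[OF multigraph \<open>adj s w\<close>] by simp_all
  ultimately show ?thesis
    using True st_bounded_strict(1) assms(1) unfolding st_numbering_def by blast
next
  case False
  then show ?thesis
    using assms unfolding st_numbering_def has_upper_neighbour_def by blast
qed

theorem admits_bipolar_orientation: "admits_bipolar_orientation V E ends s t"
proof -
  obtain f where numbering: "st_numbering V f"
    using st_numbering_exists by blast
  then have "inj_on f V" "\<forall>v\<in>V. f s \<le> f v \<and> f v \<le> f t"
    unfolding st_numbering_def st_bounded_def by blast+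
  then have "bipolar_orientation V E ends s t (orient_by f ends)"
    using bipolar_orientation_orient_by[OF multigraph]
      st_numbering_lower_neighbour[OF numbering] st_numbering_upper_neighbour[OF numbering]
    by blast
  then show ?thesis
    unfolding admits_bipolar_orientation_def by blast
qed

end

lemma pole_reachable_avoiding_pole:
  assumes "V = {s, t} \<union> A \<union> B" "{s, t} \<inter> (A \<union> B) = {}"
    and connected: "induced_connected E ends (A \<union> B)"
    and "\<exists>a\<in>A. adjacent E ends s a" "\<exists>a\<in>A. adjacent E ends t a"
    and "x \<in> {s, t}" "v \<in> V - {s, t}" "r \<in> {s, t} - {x}"
  shows "(v, r) \<in> (adj_outside E ends {x})\<^sup>*"
proof -
  obtain a where "a \<in> A" "adjacent E ends r a"
    using assms(4,5,8) by (cases "r = s") auto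
  have "v \<in> A \<union> B"
    using assms(1,7) by blast
  have "{(u, w). u \<in> A \<union> B \<and> w \<in> A \<union> B \<and> adjacent E ends u w} \<subseteq> adj_outside E ends {x}"
    using assms(2,6) unfolding adj_outside_def by blast
  moreover have "(v, a) \<in> {(u, w). u \<in> A \<union> B \<and> w \<in> A \<union> B \<and> adjacent E ends u w}\<^sup>*"
    using connected \<open>v \<in> A \<union> B\<close> \<open>a \<in> A\<close> unfolding induced_connected_def by blast
  ultimately have "(v, a) \<in> (adj_outside E ends {x})\<^sup>*"
    using rtrancl_mono by blast
  moreover have "(a, r) \<in> adj_outside E ends {x}"
    using \<open>a \<in> A\<close> adjacent_sym[OF \<open>adjacent E ends r a\<close>] assms(2,6,8)
    unfolding adj_outside_def by blast
  ultimately show ?thesis ..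
qed

lemma pole_reachable_avoiding_inner:
  assumes "V = {s, t} \<union> A \<union> B" "{s, t} \<inter> (A \<union> B) = {}"
    and to_pole: "\<forall>a\<in>A. adjacent E ends a s \<or> adjacent E ends a t"
    and to_A: "\<forall>b\<in>B. card {a\<in>A. adjacent E ends b a} \<ge> 2"
    and "x \<notin> {s, t}" "v \<in> V - {s, t, x}"
  shows "\<exists>r\<in>{s, t} - {x}. (v, r) \<in> (adj_outside E ends {x})\<^sup>*"
proof -
  have via_A: "\<exists>r\<in>{s, t} - {x}. (a, r) \<in> adj_outside E ends {x}" if "a \<in> A" "a \<noteq> x" for a
    using to_pole that assms(5) unfolding adj_outside_def by auto
  show ?thesis
  proof (cases "v \<in> A")
    case True
    then show ?thesis
      using via_A assms(6) by blast
  next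
    case False
    then have "v \<in> B"
      using assms(1,6) by blast
    have "\<not> {a\<in>A. adjacent E ends v a} \<subseteq> {x}"
      using to_A \<open>v \<in> B\<close> card_mono[of "{x}" "{a\<in>A. adjacent E ends v a}"] by fastforce
    then obtain a where "a \<in> A" "adjacent E ends v a" "a \<noteq> x"
      by blast
    then have "(v, a) \<in> adj_outside E ends {x}"
      using assms(6) unfolding adj_outside_def by blast
    then show ?thesis
      using via_A[OF \<open>a \<in> A\<close> \<open>a \<noteq> x\<close>] by (meson converse_rtrancl_into_rtrancl r_into_rtrancl)
  qed
qed

theorem lemma5p5:
  fixes V :: "'v set" and E :: "'e set" and ends :: "'e \<Rightarrow> 'v \<times> 'v"
    and s t :: 'v and A B :: "'v set"
  assumes "multigraph_no_loops V E ends"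
    and "s \<noteq> t"
    and "V = {s, t} \<union> A \<union> B"
    and "{s, t} \<inter> A = {}" and "{s, t} \<inter> B = {}" and "A \<inter> B = {}"
    and "induced_connected E ends (A \<union> B)"
    and "\<exists>a\<in>A. adjacent E ends s a"
    and "\<exists>a\<in>A. adjacent E ends t a"
    and "\<forall>a\<in>A. adjacent E ends a s \<or> adjacent E ends a t"
    and "\<forall>b\<in>B. card {a\<in>A. adjacent E ends b a} \<ge> 2"
  shows "admits_bipolar_orientation V E ends s t"
proof -
  have poles: "{s, t} \<inter> (A \<union> B) = {}"
    using assms(4,5) by blast
  have "\<exists>r\<in>{s, t} - {x}. (v, r) \<in> (adj_outside E ends {x})\<^sup>*"
    if "x \<in> V" "v \<in> V - {s, t, x}" for x v
  proof (cases "x \<in> {s, t}")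
    case True
    moreover obtain r where "r \<in> {s, t} - {x}"
      using assms(2) by blast
    ultimately show ?thesis
      using pole_reachable_avoiding_pole[OF assms(3) poles assms(7-9)] that(2) by blast
  next
    case False
    then show ?thesis
      using pole_reachable_avoiding_inner[OF assms(3) poles assms(10,11)] that(2) by blast
  qed
  moreover have "s \<in> V" "t \<in> V" "\<exists>u. adjacent E ends s u" "\<exists>u. adjacent E ends t u"
    using assms(3,8,9) by auto
  ultimately interpret st_biconnected V E ends s t
    using assms(1,2) by unfold_locales auto
  show ?thesis
    by (rule admits_bipolar_orientation)
qed

end
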